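(* Let $X,Y,Z$ be complex Banach spaces, $\emptyset\ne I\subseteq\mathbb R^n$, let $\mathbb D\subseteq I$ be unbounded, let $\mathcal B$ be a non-empty collection of non-empty subsets of $X$ such that every $x\in X$ belongs to some $B\in\mathcal B$, and let $\mathrm R$ be a non-empty collection of sequences in $\mathbb R^n$ with $\mathbf t+\mathbf b(l)\in I$ whenever $\mathbf t\in I$, $\mathbf b\in\mathrm R$, $l\in\mathbb N$. Suppose $F_0:I\times X\to Y$ is $(\mathrm R,\mathcal B)$-multi-almost periodic, $Q_0\in C_{0,\mathbb D,\mathcal B}(I\times X:Y)$ and $F=F_0+Q_0$ on $I\times X$. Suppose $G_1:I\times Y\to Z$ is $(\mathrm R',\mathcal B')$-multi-almost periodic, where $\mathrm R'$ consists of all sequences from $\mathrm R$ and all their subsequences and $\mathcal B':=\{\bigcup_{\mathbf t\in I}F_0(\mathbf t;B):B\in\mathcal B\}$; $Q_1\in C_{0,\mathbb D,\mathcal B_1}(I\times Y:Z)$ with $\mathcal B_1:=\{\bigcup_{\mathbf t\in I}F(\mathbf t;B):B\in\mathcal B\}$; and $G=G_1+Q_1$ on $I\times Y$. If there exists $L>0$ with $\|G_1(\mathbf t;x)-G_1(\mathbf t;y)\|_Z\le L\|x-y\|_Y$ for all $\mathbf t\in I$, $x,y\in Y$, then $W(\mathbf t;x):=G(\mathbf t;F(\mathbf t;x))$ is $\mathbb D$-asymptotically $(\mathrm R,\mathcal B)$-multi-almost periodic.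
   Context: For Banach spaces $U,V$ and a collection $\mathcal C$ of subsets of $U$: $C_{0,\mathbb D,\mathcal C}(I\times U:V)$ is the space of continuous $Q:I\times U\to V$ such that for every $C\in\mathcal C$, $\lim_{\mathbf t\in\mathbb D,|\mathbf t|\to\infty}Q(\mathbf t;u)=0$ uniformly for $u\in C$. A continuous $H:I\times U\to V$ is $(\mathrm S,\mathcal C)$-multi-almost periodic (for a collection $\mathrm S$ of sequences in $\mathbb R^n$ with $\mathbf t+\mathbf b(l)\in I$ for $\mathbf t\in I$, $\mathbf b\in\mathrm S$) if for every $C\in\mathcal C$ and $(\mathbf b_k)\in\mathrm S$ there exist a subsequence $(\mathbf b_{k_l})$ and $H^\ast$ with $H(\mathbf t+\mathbf b_{k_l};u)\to H^\ast(\mathbf t;u)$ uniformly for $u\in C$, $\mathbf t\in I$. $W:I\times X\to Z$ is $\mathbb D$-asymptotically $(\mathrm R,\mathcal B)$-multi-almost periodic if $W=G'+Q'$ with $G'$ $(\mathrm R,\mathcal B)$-multi-almost periodic and $Q'\in C_{0,\mathbb D,\mathcal B}(I\times X:Z)$. *)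

theory Defs
  imports "HOL-Analysis.Analysis"
begin

definition C0D ::
  "(real^'n::finite) set \<Rightarrow> (real^'n) set \<Rightarrow> 'u::real_normed_vector set set
   \<Rightarrow> (real^'n \<Rightarrow> 'u \<Rightarrow> 'v::real_normed_vector) \<Rightarrow> bool" where
  "C0D I D \<C> Q \<longleftrightarrow>
     continuous_on (I \<times> UNIV) (\<lambda>(t, u). Q t u) \<and>
     (\<forall>C\<in>\<C>. \<forall>\<epsilon>>0. \<exists>M. \<forall>t\<in>D. norm t \<ge> M \<longrightarrow> (\<forall>u\<in>C. norm (Q t u) < \<epsilon>))"

definition multi_almost_periodic ::
  "(real^'n::finite) set \<Rightarrow> (nat \<Rightarrow> real^'n) set \<Rightarrow> 'u::real_normed_vector set set
   \<Rightarrow> (real^'n \<Rightarrow> 'u \<Rightarrow> 'v::real_normed_vector) \<Rightarrow> bool" where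
  "multi_almost_periodic I S \<C> H \<longleftrightarrow>
     continuous_on (I \<times> UNIV) (\<lambda>(t, u). H t u) \<and>
     (\<forall>C\<in>\<C>. \<forall>b\<in>S. \<exists>(r::nat \<Rightarrow> nat) Hs. strict_mono r \<and>
        (\<forall>\<epsilon>>0. \<exists>N. \<forall>l\<ge>N. \<forall>t\<in>I. \<forall>u\<in>C. dist (H (t + b (r l)) u) (Hs t u) < \<epsilon>))"

definition asymp_multi_almost_periodic ::
  "(real^'n::finite) set \<Rightarrow> (real^'n) set \<Rightarrow> (nat \<Rightarrow> real^'n) set \<Rightarrow> 'u::real_normed_vector set set
   \<Rightarrow> (real^'n \<Rightarrow> 'u \<Rightarrow> 'v::real_normed_vector) \<Rightarrow> bool" where
  "asymp_multi_almost_periodic I D R \<B> W \<longleftrightarrow>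
     (\<exists>G' Q'. multi_almost_periodic I R \<B> G' \<and> C0D I D \<B> Q' \<and>
        (\<forall>t\<in>I. \<forall>x. W t x = G' t x + Q' t x))"

end

theory Submission
  imports Defs
begin

(* Split W(t;x) = G1(t;F0(t;x)) + [G1(t;F(t;x)) - G1(t;F0(t;x))] + Q1(t;F(t;x)).
   In a Banach space, uniform convergence of translates is equivalent to their uniform Cauchy
   property. Along a subsequence of b the translates of F0 are uniformly Cauchy on B, and along a
   further subsequence those of G1 are uniformly Cauchy on the range of F0 on B; the Lipschitz
   bound on G1 combines the two, so the first summand is (R,B)-multi-almost periodic. The bracket
   is at most L |Q0(t;x)|, and the last summand vanishes at infinity in D because F maps B into
   the set on which Q1 decays uniformly. *)

lemma uniformly_convergent2_eq_Cauchy: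
  fixes f :: "nat \<Rightarrow> 'a \<Rightarrow> 'b \<Rightarrow> 'c::complete_space"
  shows "(\<exists>g. \<forall>\<epsilon>>0. \<exists>N. \<forall>l\<ge>N. \<forall>t\<in>S. \<forall>u\<in>T. dist (f l t u) (g t u) < \<epsilon>) \<longleftrightarrow>
         (\<forall>\<epsilon>>0. \<exists>N. \<forall>l\<ge>N. \<forall>m\<ge>N. \<forall>t\<in>S. \<forall>u\<in>T. dist (f l t u) (f m t u) < \<epsilon>)"
    (is "?conv \<longleftrightarrow> ?Cauchy")
proof -
  let ?f = "\<lambda>l (t, u). f l t u"
  have "?conv \<longleftrightarrow> uniformly_convergent_on (S \<times> T) ?f"
    unfolding uniformly_convergent_on_def uniform_limit_sequentially_iff
  proof
    assume ?conv
    then obtain g where "\<forall>\<epsilon>>0. \<exists>N. \<forall>l\<ge>N. \<forall>t\<in>S. \<forall>u\<in>T. dist (f l t u) (g t u) < \<epsilon>" ..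
    then show "\<exists>h. \<forall>\<epsilon>>0. \<exists>N. \<forall>l\<ge>N. \<forall>p\<in>S \<times> T. dist (?f l p) (h p) < \<epsilon>"
      by (intro exI[of _ "case_prod g"]) auto
  next
    assume "\<exists>h. \<forall>\<epsilon>>0. \<exists>N. \<forall>l\<ge>N. \<forall>p\<in>S \<times> T. dist (?f l p) (h p) < \<epsilon>"
    then obtain h where "\<forall>\<epsilon>>0. \<exists>N. \<forall>l\<ge>N. \<forall>p\<in>S \<times> T. dist (?f l p) (h p) < \<epsilon>" ..
    then show ?conv
      by (intro exI[of _ "curry h"]) fastforce
  qed
  also have "\<dots> \<longleftrightarrow> uniformly_Cauchy_on (S \<times> T) ?f"
    by (rule uniformly_convergent_eq_Cauchy)
  also have "\<dots> \<longleftrightarrow> ?Cauchy"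
    unfolding uniformly_Cauchy_on_def by fastforce
  finally show ?thesis .
qed

definition uniformly_Cauchy_translates ::
  "'a::plus set \<Rightarrow> 'u set \<Rightarrow> ('a \<Rightarrow> 'u \<Rightarrow> 'v::metric_space) \<Rightarrow> (nat \<Rightarrow> 'a) \<Rightarrow> bool" where
  "uniformly_Cauchy_translates I C H c \<longleftrightarrow>
     (\<forall>\<epsilon>>0. \<exists>N. \<forall>l\<ge>N. \<forall>m\<ge>N. \<forall>t\<in>I. \<forall>u\<in>C. dist (H (t + c l) u) (H (t + c m) u) < \<epsilon>)"

lemma multi_almost_periodic_iff_uniformly_Cauchy_translates:
  fixes H :: "real^'n \<Rightarrow> 'u::real_normed_vector \<Rightarrow> 'v::banach"
  shows "multi_almost_periodic I S \<C> H \<longleftrightarrow>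
           continuous_on (I \<times> UNIV) (\<lambda>(t, u). H t u) \<and>
           (\<forall>C\<in>\<C>. \<forall>b\<in>S. \<exists>r. strict_mono r \<and> uniformly_Cauchy_translates I C H (b \<circ> r))"
proof -
  have "(\<exists>Hs. \<forall>\<epsilon>>0. \<exists>N. \<forall>l\<ge>N. \<forall>t\<in>I. \<forall>u\<in>C. dist (H (t + c l) u) (Hs t u) < \<epsilon>) \<longleftrightarrow>
        uniformly_Cauchy_translates I C H c" for C c
    unfolding uniformly_Cauchy_translates_def
    by (rule uniformly_convergent2_eq_Cauchy[where f = "\<lambda>l t u. H (t + c l) u"])
  then show ?thesis
    unfolding multi_almost_periodic_def comp_def by presburger
qed

lemma uniformly_Cauchy_translates_subseq:
  assumes "uniformly_Cauchy_translates I C H c" and "strict_mono r"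
  shows "uniformly_Cauchy_translates I C H (c \<circ> r)"
  unfolding uniformly_Cauchy_translates_def
proof (intro allI impI)
  fix \<epsilon> :: real assume "\<epsilon> > 0"
  then obtain N where N: "\<forall>l\<ge>N. \<forall>m\<ge>N. \<forall>t\<in>I. \<forall>u\<in>C. dist (H (t + c l) u) (H (t + c m) u) < \<epsilon>"
    using assms(1) unfolding uniformly_Cauchy_translates_def by blast
  have "r l \<ge> N" if "l \<ge> N" for l
    using seq_suble[OF assms(2), of l] that by linarith
  with N show "\<exists>N. \<forall>l\<ge>N. \<forall>m\<ge>N. \<forall>t\<in>I. \<forall>u\<in>C. dist (H (t + (c \<circ> r) l) u) (H (t + (c \<circ> r) m) u) < \<epsilon>"
    by (metis comp_apply)
qed

lemma uniformly_Cauchy_translates_compose_Lipschitz: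
  fixes F :: "'a::plus \<Rightarrow> 'x \<Rightarrow> 'y::real_normed_vector" and G :: "'a \<Rightarrow> 'y \<Rightarrow> 'z::real_normed_vector"
  assumes translates: "\<forall>t\<in>I. \<forall>l. t + c l \<in> I"
    and F: "uniformly_Cauchy_translates I B F c"
    and G: "uniformly_Cauchy_translates I C G c"
    and maps_to: "\<forall>t\<in>I. \<forall>u\<in>B. F t u \<in> C"
    and "L > 0" and Lipschitz: "\<forall>t\<in>I. \<forall>x y. norm (G t x - G t y) \<le> L * norm (x - y)"
  shows "uniformly_Cauchy_translates I B (\<lambda>t x. G t (F t x)) c"
  unfolding uniformly_Cauchy_translates_def
proof (intro allI impI)
  fix \<epsilon> :: real assume "\<epsilon> > 0"
  then obtain NF where NF: "\<forall>l\<ge>NF. \<forall>m\<ge>NF. \<forall>t\<in>I. \<forall>u\<in>B. dist (F (t + c l) u) (F (t + c m) u) < \<epsilon> / (2 * L)"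
    using F \<open>L > 0\<close> unfolding uniformly_Cauchy_translates_def by (meson divide_pos_pos zero_less_mult_iff zero_less_numeral)
  obtain NG where NG: "\<forall>l\<ge>NG. \<forall>m\<ge>NG. \<forall>t\<in>I. \<forall>y\<in>C. dist (G (t + c l) y) (G (t + c m) y) < \<epsilon> / 2"
    using G \<open>\<epsilon> > 0\<close> unfolding uniformly_Cauchy_translates_def by (meson half_gt_zero)
  have "dist (G (t + c l) (F (t + c l) u)) (G (t + c m) (F (t + c m) u)) < \<epsilon>"
    if "l \<ge> max NF NG" "m \<ge> max NF NG" "t \<in> I" "u \<in> B" for l m t u
  proof -
    let ?s = "t + c l" and ?s' = "t + c m"
    have "dist (G ?s (F ?s u)) (G ?s (F ?s' u)) \<le> L * dist (F ?s u) (F ?s' u)"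
      using Lipschitz translates \<open>t \<in> I\<close> by (simp add: dist_norm)
    also have "\<dots> < L * (\<epsilon> / (2 * L))"
      using NF that \<open>L > 0\<close> by (intro mult_strict_left_mono) auto
    also have "\<dots> = \<epsilon> / 2"
      using \<open>L > 0\<close> by simp
    finally have "dist (G ?s (F ?s u)) (G ?s (F ?s' u)) < \<epsilon> / 2" .
    moreover have "dist (G ?s (F ?s' u)) (G ?s' (F ?s' u)) < \<epsilon> / 2"
      using NG maps_to translates that by simp
    ultimately show ?thesis
      using dist_triangle[of "G ?s (F ?s u)" "G ?s' (F ?s' u)" "G ?s (F ?s' u)"] by linarith
  qed
  then show "\<exists>N. \<forall>l\<ge>N. \<forall>m\<ge>N. \<forall>t\<in>I. \<forall>u\<in>B.
      dist (G (t + c l) (F (t + c l) u)) (G (t + c m) (F (t + c m) u)) < \<epsilon>"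
    by blast
qed

lemma continuous_on_compose_parametric:
  assumes "continuous_on (I \<times> UNIV) (\<lambda>(t, y). G t y)" and "continuous_on (I \<times> UNIV) (\<lambda>(t, x). F t x)"
  shows "continuous_on (I \<times> UNIV) (\<lambda>(t, x). G t (F t x))"
proof -
  have "continuous_on (I \<times> UNIV) (\<lambda>p. (fst p, F (fst p) (snd p)))"
    using assms(2) by (intro continuous_intros) (simp add: case_prod_beta)
  moreover have "(\<lambda>p. (fst p, F (fst p) (snd p))) ` (I \<times> UNIV) \<subseteq> I \<times> UNIV"
    by auto
  ultimately have "continuous_on (I \<times> UNIV) ((\<lambda>(t, y). G t y) \<circ> (\<lambda>p. (fst p, F (fst p) (snd p))))"
    using continuous_on_compose continuous_on_subset assms(1) by blast
  then show ?thesis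
    by (simp add: o_def case_prod_beta)
qed

lemma multi_almost_periodic_compose_Lipschitz:
  fixes F :: "real^'n \<Rightarrow> 'x::real_normed_vector \<Rightarrow> 'y::banach" and G :: "real^'n \<Rightarrow> 'y \<Rightarrow> 'z::banach"
  assumes translates: "\<forall>t\<in>I. \<forall>b\<in>R. \<forall>l. t + b l \<in> I"
    and F: "multi_almost_periodic I R \<B> F"
    and G: "multi_almost_periodic I {b \<circ> r | b (r::nat \<Rightarrow> nat). b \<in> R \<and> strict_mono r}
              {(\<Union>t\<in>I. F t ` B) | B. B \<in> \<B>} G"
    and "L > 0" and Lipschitz: "\<forall>t\<in>I. \<forall>x y. norm (G t x - G t y) \<le> L * norm (x - y)"
  shows "multi_almost_periodic I R \<B> (\<lambda>t x. G t (F t x))"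
  unfolding multi_almost_periodic_iff_uniformly_Cauchy_translates
proof (intro conjI ballI)
  show "continuous_on (I \<times> UNIV) (\<lambda>(t, x). G t (F t x))"
    using F G unfolding multi_almost_periodic_def by (simp add: continuous_on_compose_parametric)
next
  fix B b assume "B \<in> \<B>" and "b \<in> R"
  then obtain r where r: "strict_mono r" and F_Cauchy: "uniformly_Cauchy_translates I B F (b \<circ> r)"
    using F unfolding multi_almost_periodic_iff_uniformly_Cauchy_translates by blast
  have "b \<circ> r \<in> {b \<circ> r | b (r::nat \<Rightarrow> nat). b \<in> R \<and> strict_mono r}"
    using \<open>b \<in> R\<close> r by blast
  moreover have "(\<Union>t\<in>I. F t ` B) \<in> {(\<Union>t\<in>I. F t ` B) | B. B \<in> \<B>}"
    using \<open>B \<in> \<B>\<close> by blast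
  ultimately obtain r' where r': "strict_mono r'"
    and G_Cauchy: "uniformly_Cauchy_translates I (\<Union>t\<in>I. F t ` B) G (b \<circ> r \<circ> r')"
    using G unfolding multi_almost_periodic_iff_uniformly_Cauchy_translates by blast
  have "uniformly_Cauchy_translates I B (\<lambda>t x. G t (F t x)) (b \<circ> r \<circ> r')"
  proof (rule uniformly_Cauchy_translates_compose_Lipschitz[OF _ _ G_Cauchy _ \<open>L > 0\<close> Lipschitz])
    show "\<forall>t\<in>I. \<forall>l. t + (b \<circ> r \<circ> r') l \<in> I"
      using translates \<open>b \<in> R\<close> by simp
    show "uniformly_Cauchy_translates I B F (b \<circ> r \<circ> r')"
      using uniformly_Cauchy_translates_subseq[OF F_Cauchy r'] .
    show "\<forall>t\<in>I. \<forall>u\<in>B. F t u \<in> (\<Union>t\<in>I. F t ` B)"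
      by blast
  qed
  moreover have "strict_mono (r \<circ> r')"
    using r r' by (rule strict_mono_o)
  ultimately show "\<exists>r. strict_mono r \<and> uniformly_Cauchy_translates I B (\<lambda>t x. G t (F t x)) (b \<circ> r)"
    by (metis comp_assoc)
qed

lemma C0D_add:
  assumes "C0D I D \<C> P" and "C0D I D \<C> Q"
  shows "C0D I D \<C> (\<lambda>t u. P t u + Q t u)"
  unfolding C0D_def
proof (intro conjI ballI allI impI)
  have "continuous_on (I \<times> UNIV) (\<lambda>(t, u). P t u)" "continuous_on (I \<times> UNIV) (\<lambda>(t, u). Q t u)"
    using assms unfolding C0D_def by blast+
  then show "continuous_on (I \<times> UNIV) (\<lambda>(t, u). P t u + Q t u)"
    unfolding case_prod_beta by (rule continuous_on_add)
next
  fix C and \<epsilon> :: real assume "C \<in> \<C>" and "\<epsilon> > 0"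
  then obtain MP MQ where
    MP: "\<forall>t\<in>D. norm t \<ge> MP \<longrightarrow> (\<forall>u\<in>C. norm (P t u) < \<epsilon> / 2)" and
    MQ: "\<forall>t\<in>D. norm t \<ge> MQ \<longrightarrow> (\<forall>u\<in>C. norm (Q t u) < \<epsilon> / 2)"
    using assms unfolding C0D_def by (meson half_gt_zero)
  have "norm (P t u + Q t u) < \<epsilon>" if "t \<in> D" "norm t \<ge> max MP MQ" "u \<in> C" for t u
    using MP MQ that norm_triangle_ineq[of "P t u" "Q t u"] by fastforce
  then show "\<exists>M. \<forall>t\<in>D. norm t \<ge> M \<longrightarrow> (\<forall>u\<in>C. norm (P t u + Q t u) < \<epsilon>)"
    by blast
qed

lemma C0D_Lipschitz_compose_diff:
  fixes G :: "real^'n \<Rightarrow> 'y::real_normed_vector \<Rightarrow> 'z::real_normed_vector"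
  assumes "D \<subseteq> I"
    and G_cont: "continuous_on (I \<times> UNIV) (\<lambda>(t, y). G t y)"
    and F_cont: "continuous_on (I \<times> UNIV) (\<lambda>(t, x). F t x)"
    and Q: "C0D I D \<C> Q"
    and "L > 0" and Lipschitz: "\<forall>t\<in>I. \<forall>x y. norm (G t x - G t y) \<le> L * norm (x - y)"
  shows "C0D I D \<C> (\<lambda>t x. G t (F t x + Q t x) - G t (F t x))"
  unfolding C0D_def
proof (intro conjI ballI allI impI)
  have "continuous_on (I \<times> UNIV) (\<lambda>(t, x). Q t x)"
    using Q unfolding C0D_def by blast
  with F_cont have "continuous_on (I \<times> UNIV) (\<lambda>(t, x). F t x + Q t x)"
    unfolding case_prod_beta by (rule continuous_on_add)
  with G_cont have "continuous_on (I \<times> UNIV) (\<lambda>(t, x). G t (F t x + Q t x))"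
    by (rule continuous_on_compose_parametric)
  moreover have "continuous_on (I \<times> UNIV) (\<lambda>(t, x). G t (F t x))"
    using G_cont F_cont by (rule continuous_on_compose_parametric)
  ultimately show "continuous_on (I \<times> UNIV) (\<lambda>(t, x). G t (F t x + Q t x) - G t (F t x))"
    unfolding case_prod_beta by (rule continuous_on_diff)
next
  fix C and \<epsilon> :: real assume "C \<in> \<C>" and "\<epsilon> > 0"
  then obtain M where M: "\<forall>t\<in>D. norm t \<ge> M \<longrightarrow> (\<forall>u\<in>C. norm (Q t u) < \<epsilon> / L)"
    using Q \<open>L > 0\<close> unfolding C0D_def by (meson divide_pos_pos)
  have "norm (G t (F t u + Q t u) - G t (F t u)) < \<epsilon>" if "t \<in> D" "norm t \<ge> M" "u \<in> C" for t u
  proof -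
    have "norm (G t (F t u + Q t u) - G t (F t u)) \<le> L * norm (Q t u)"
      using Lipschitz \<open>D \<subseteq> I\<close> \<open>t \<in> D\<close> by (metis add_diff_cancel_left' subsetD)
    also have "\<dots> < L * (\<epsilon> / L)"
      using M that \<open>L > 0\<close> by (intro mult_strict_left_mono) auto
    finally show ?thesis
      using \<open>L > 0\<close> by simp
  qed
  then show "\<exists>M. \<forall>t\<in>D. norm t \<ge> M \<longrightarrow> (\<forall>u\<in>C. norm (G t (F t u + Q t u) - G t (F t u)) < \<epsilon>)"
    by blast
qed

lemma C0D_compose:
  assumes "D \<subseteq> I"
    and F_cont: "continuous_on (I \<times> UNIV) (\<lambda>(t, x). F t x)"
    and Q: "C0D I D {(\<Union>t\<in>I. F t ` B) | B. B \<in> \<C>} Q"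
  shows "C0D I D \<C> (\<lambda>t x. Q t (F t x))"
  unfolding C0D_def
proof (intro conjI ballI allI impI)
  show "continuous_on (I \<times> UNIV) (\<lambda>(t, x). Q t (F t x))"
    using Q F_cont unfolding C0D_def by (simp add: continuous_on_compose_parametric)
next
  fix B and \<epsilon> :: real assume "B \<in> \<C>" and "\<epsilon> > 0"
  then obtain M where M: "\<forall>t\<in>D. norm t \<ge> M \<longrightarrow> (\<forall>y\<in>(\<Union>t\<in>I. F t ` B). norm (Q t y) < \<epsilon>)"
    using Q unfolding C0D_def by blast
  then show "\<exists>M. \<forall>t\<in>D. norm t \<ge> M \<longrightarrow> (\<forall>u\<in>B. norm (Q t (F t u)) < \<epsilon>)"
    using \<open>D \<subseteq> I\<close> by blast
qed

theorem theorem2p48: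
  fixes I D :: "(real^'n) set"
    and \<B> :: "'x::banach set set"
    and R :: "(nat \<Rightarrow> real^'n) set"
    and F0 Q0 F :: "real^'n \<Rightarrow> 'x \<Rightarrow> 'y::banach"
    and G1 Q1 G :: "real^'n \<Rightarrow> 'y \<Rightarrow> 'z::banach"
    and L :: real
  assumes "I \<noteq> {}" and "D \<subseteq> I" and "\<not> bounded D"
    and "\<B> \<noteq> {}" and "\<forall>B\<in>\<B>. B \<noteq> {}" and "\<forall>x. \<exists>B\<in>\<B>. x \<in> B"
    and "R \<noteq> {}" and "\<forall>t\<in>I. \<forall>b\<in>R. \<forall>l. t + b l \<in> I"
    and "multi_almost_periodic I R \<B> F0"
    and "C0D I D \<B> Q0"
    and "\<forall>t\<in>I. \<forall>x. F t x = F0 t x + Q0 t x"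
    and "multi_almost_periodic I {b \<circ> r | b (r::nat \<Rightarrow> nat). b \<in> R \<and> strict_mono r}
           {(\<Union>t\<in>I. F0 t ` B) | B. B \<in> \<B>} G1"
    and "C0D I D {(\<Union>t\<in>I. F t ` B) | B. B \<in> \<B>} Q1"
    and "\<forall>t\<in>I. \<forall>y. G t y = G1 t y + Q1 t y"
    and "L > 0" and "\<forall>t\<in>I. \<forall>x y. norm (G1 t x - G1 t y) \<le> L * norm (x - y)"
  shows "asymp_multi_almost_periodic I D R \<B> (\<lambda>t x. G t (F t x))"
proof -
  note translates = assms(8) and F0 = assms(9) and Q0 = assms(10) and F_eq = assms(11)
    and G1 = assms(12) and Q1 = assms(13) and G_eq = assms(14) and Lipschitz = assms(15,16)
  define F' where "F' t x = F0 t x + Q0 t x" for t x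
  have F0_cont: "continuous_on (I \<times> UNIV) (\<lambda>(t, x). F0 t x)"
    using F0 unfolding multi_almost_periodic_def by blast
  have "continuous_on (I \<times> UNIV) (\<lambda>(t, x). Q0 t x)"
    using Q0 unfolding C0D_def by blast
  with F0_cont have F'_cont: "continuous_on (I \<times> UNIV) (\<lambda>(t, x). F' t x)"
    unfolding F'_def case_prod_beta by (rule continuous_on_add)
  have G1_cont: "continuous_on (I \<times> UNIV) (\<lambda>(t, y). G1 t y)"
    using G1 unfolding multi_almost_periodic_def by blast
  have "(\<Union>t\<in>I. F t ` B) = (\<Union>t\<in>I. F' t ` B)" for B
    using F_eq unfolding F'_def by (intro SUP_cong image_cong) auto
  then have "C0D I D \<B> (\<lambda>t x. Q1 t (F' t x))"
    using C0D_compose[OF \<open>D \<subseteq> I\<close> F'_cont] Q1 by simp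
  then have "C0D I D \<B> (\<lambda>t x. (G1 t (F' t x) - G1 t (F0 t x)) + Q1 t (F' t x))"
    using C0D_Lipschitz_compose_diff[OF \<open>D \<subseteq> I\<close> G1_cont F0_cont Q0 Lipschitz]
    unfolding F'_def by (rule C0D_add[rotated])
  moreover have "multi_almost_periodic I R \<B> (\<lambda>t x. G1 t (F0 t x))"
    using translates F0 G1 Lipschitz by (rule multi_almost_periodic_compose_Lipschitz)
  moreover have "\<forall>t\<in>I. \<forall>x. G t (F t x) = G1 t (F0 t x) + ((G1 t (F' t x) - G1 t (F0 t x)) + Q1 t (F' t x))"
    using F_eq G_eq unfolding F'_def by simp
  ultimately show ?thesis
    unfolding asymp_multi_almost_periodic_def by blast
qed

end
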